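(* Assume the Setting below. Let $\gamma_1,\dots,\gamma_c\in\mathbb R^d$ be server vectors with fixed vectors $\mathbb E\gamma_1,\dots,\mathbb E\gamma_c$, and suppose that for every $i\in\mathcal H$ there is a probability vector $(p_{i1},\dots,p_{ic})$ with $\mathbb Eg_i=\sum_{z=1}^cp_{iz}\mathbb E\gamma_z$. Let $\hat{\mathcal P}_0$ be an affine subspace containing $\gamma_1,\dots,\gamma_c$, and let $\hat{\mathcal P}$ be any affine subspace with $\ell_t(\hat{\mathcal P})\le\ell_t(\hat{\mathcal P}_0)$. Then $$\ell_t(\hat{\mathcal P})\le\frac{2(n-f)}{|\mathcal H|}\Big(\sum_{i\in\mathcal H}\|g_i-\mathbb Eg_i\|_2^2+\sum_{i\in\mathcal H}\sum_{z=1}^cp_{iz}\|\mathbb E\gamma_z-\gamma_z\|_2^2\Big).$$ Consequently, if $\mathbb E\|g_i-\mathbb Eg_i\|_2^2\le\epsilon^2$ for $i\in\mathcal H$ and $\mathbb E\|\gamma_z-\mathbb E\gamma_z\|_2^2\le\epsilon_s^2$ for all $z$, then $\mathbb E\,\ell_t(\hat{\mathcal P})\le2(n-f)(\epsilon^2+\epsilon_s^2)$.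
   Context: Setting: let $n,f,c,d$ be positive integers with $c\ge2$, $d\ge c$, $n-2f\ge1$. The index set $\{1,\dots,n\}$ is partitioned as $\mathcal H\sqcup\mathcal B$ (honest and Byzantine clients) with $|\mathcal B|\le f$. Each client $i$ has a vector $g_i\in\mathbb R^d$; for $i\in\mathcal H$, $\mathbb Eg_i\in\mathbb R^d$ denotes a fixed vector (the expectation of $g_i$), and $\mathbb E\mu=\frac1{|\mathcal H|}\sum_{i\in\mathcal H}\mathbb Eg_i$. A $k$-dimensional affine subspace is $\mathcal P=\{U\lambda+m:\lambda\in\mathbb R^k\}$ with $U\in\mathbb R^{d\times k}$ having orthonormal columns and $m\in\mathbb R^d$; its orthogonal projection is $\Pi_{\mathcal P}(w)=UU^\top(w-m)+m$. The trimmed reconstruction loss of an affine subspace $\mathcal P$ is $\ell_t(\mathcal P)=\min_{S\subseteq\{1,\dots,n\},\,|S|=n-f}\sum_{i\in S}\|g_i-\Pi_{\mathcal P}(g_i)\|_2^2$. (In the algorithm, $\hat{\mathcal P}_0$ is the affine subspace fitted to the server vectors by truncated SVD, and $\hat{\mathcal P}$ results from alternating minimization, which does not increase $\ell_t$.) *)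

theory Defs
  imports "HOL-Analysis.Analysis" "HOL-Probability.Probability"
begin

text \<open>An affine subspace P = {U lambda + m} is represented by the list U of the
  columns of the d x k matrix U (k = length U) together with the offset m.\<close>

definition orthonormal_cols :: "'a::euclidean_space list \<Rightarrow> bool" where
  "orthonormal_cols U \<longleftrightarrow>
     (\<forall>j<length U. \<forall>l<length U. U ! j \<bullet> U ! l = (if j = l then 1 else 0))"

definition aff_subspace :: "'a::euclidean_space list \<Rightarrow> 'a \<Rightarrow> 'a set" where
  "aff_subspace U m = {(\<Sum>j<length U. lam j *\<^sub>R U ! j) + m | lam :: nat \<Rightarrow> real. True}"

definition aff_proj :: "'a::euclidean_space list \<Rightarrow> 'a \<Rightarrow> 'a \<Rightarrow> 'a" where
  "aff_proj U m w = (\<Sum>j<length U. ((U ! j) \<bullet> (w - m)) *\<^sub>R U ! j) + m"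

definition trimmed_loss :: "nat \<Rightarrow> nat \<Rightarrow> (nat \<Rightarrow> 'a::euclidean_space) \<Rightarrow> 'a list \<Rightarrow> 'a \<Rightarrow> real" where
  "trimmed_loss n f g U m =
     Min {(\<Sum>i\<in>S. (norm (g i - aff_proj U m (g i)))\<^sup>2) | S. S \<subseteq> {1..n} \<and> card S = n - f}"

end

theory Submission
  imports Defs
begin

text \<open>Since the server vectors \<open>\<gamma>\<^sub>z\<close> lie in the fitted subspace \<open>P\<^sub>0\<close>, so
  does every mixture \<open>\<Sum>\<^sub>z p\<^sub>i\<^sub>z \<gamma>\<^sub>z\<close>. The residual of an honest \<open>g\<^sub>i\<close> is therefore
  at most its distance to that mixture, which splits into the noise \<open>g\<^sub>i - E g\<^sub>i\<close> and a
  convex combination of the server errors \<open>E \<gamma>\<^sub>z - \<gamma>\<^sub>z\<close>. The trimmed loss of \<open>P\<^sub>0\<close> is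
  at most the residual sum over the \<open>n - f\<close> honest clients with the smallest residuals,
  which is at most the fraction \<open>(n - f)/|H|\<close> of the honest total. Taking expectations
  termwise gives the second bound.\<close>

lemma aff_proj_dist_le:
  fixes U :: "'a::euclidean_space list"
  assumes on: "orthonormal_cols U" and y: "y \<in> aff_subspace U m"
  shows "norm (w - aff_proj U m w) \<le> norm (w - y)"
proof -
  obtain lam where yl: "y = (\<Sum>j<length U. lam j *\<^sub>R U ! j) + m"
    using y unfolding aff_subspace_def by blast
  define v where "v = w - m"
  define P where "P = (\<Sum>j<length U. ((U ! j) \<bullet> v) *\<^sub>R U ! j)"
  define Q where "Q = (\<Sum>j<length U. (((U ! j) \<bullet> v) - lam j) *\<^sub>R U ! j)"
  have residual: "w - aff_proj U m w = v - P" unfolding aff_proj_def v_def P_def by simp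
  have "Q = P - (\<Sum>j<length U. lam j *\<^sub>R U ! j)"
    unfolding Q_def P_def by (simp add: scaleR_diff_left sum_subtractf)
  then have split: "w - y = (v - P) + Q"
    unfolding yl v_def by simp
  have orth: "(v - P) \<bullet> (U ! l) = 0" if "l < length U" for l
  proof -
    have "P \<bullet> (U ! l) = (\<Sum>j<length U. ((U ! j) \<bullet> v) * (if j = l then 1 else 0))"
      unfolding P_def inner_sum_left using on that by (simp add: orthonormal_cols_def)
    also have "\<dots> = U ! l \<bullet> v" using that by (simp add: if_distrib cong: if_cong)
    finally show ?thesis by (simp add: inner_diff_left inner_commute)
  qed
  have "(v - P) \<bullet> Q = 0" unfolding Q_def inner_sum_right using orth by simp
  then have "(norm (w - y))\<^sup>2 = (norm (v - P))\<^sup>2 + (norm Q)\<^sup>2"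
    unfolding split by (simp add: norm_add_Pythagorean orthogonal_def)
  then have "(norm (v - P))\<^sup>2 \<le> (norm (w - y))\<^sup>2" by simp
  then show ?thesis unfolding residual using power2_le_imp_le by fastforce
qed

lemma aff_subspace_affine_comb:
  fixes U :: "'a::euclidean_space list"
  assumes fin: "finite Z" and mem: "\<And>z. z \<in> Z \<Longrightarrow> x z \<in> aff_subspace U m"
    and sum1: "(\<Sum>z\<in>Z. a z) = 1"
  shows "(\<Sum>z\<in>Z. a z *\<^sub>R x z) \<in> aff_subspace U m"
proof -
  have "\<forall>z\<in>Z. \<exists>lam. x z = (\<Sum>j<length U. lam j *\<^sub>R U ! j) + m"
    using mem unfolding aff_subspace_def by blast
  then obtain L where L: "\<And>z. z \<in> Z \<Longrightarrow> x z = (\<Sum>j<length U. L z j *\<^sub>R U ! j) + m"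
    by metis
  have "(\<Sum>z\<in>Z. a z *\<^sub>R x z) = (\<Sum>z\<in>Z. a z *\<^sub>R ((\<Sum>j<length U. L z j *\<^sub>R U ! j) + m))"
    using L by simp
  also have "\<dots> = (\<Sum>z\<in>Z. (\<Sum>j<length U. (a z * L z j) *\<^sub>R U ! j)) + (\<Sum>z\<in>Z. a z) *\<^sub>R m"
    by (simp add: scaleR_add_right sum.distrib scaleR_sum_right scaleR_sum_left)
  also have "\<dots> = (\<Sum>j<length U. (\<Sum>z\<in>Z. a z * L z j) *\<^sub>R U ! j) + m"
    using sum1 by (simp add: sum.swap[of _ Z] scaleR_sum_left)
  finally show ?thesis unfolding aff_subspace_def
    by (intro CollectI exI[where x="\<lambda>j. \<Sum>z\<in>Z. a z * L z j"]) simp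
qed

lemma norm_convex_comb_power2_le:
  fixes x :: "'b \<Rightarrow> 'a::real_normed_vector"
  assumes "finite Z" "Z \<noteq> {}" "(\<Sum>z\<in>Z. a z) = 1" "\<And>z. z \<in> Z \<Longrightarrow> a z \<ge> 0"
  shows "(norm (\<Sum>z\<in>Z. a z *\<^sub>R x z))\<^sup>2 \<le> (\<Sum>z\<in>Z. a z * (norm (x z))\<^sup>2)"
proof -
  have "norm (\<Sum>z\<in>Z. a z *\<^sub>R x z) \<le> (\<Sum>z\<in>Z. a z *\<^sub>R norm (x z))"
    by (rule order_trans[OF norm_sum]) (simp add: assms(4))
  then have "(norm (\<Sum>z\<in>Z. a z *\<^sub>R x z))\<^sup>2 \<le> (\<Sum>z\<in>Z. a z *\<^sub>R norm (x z))\<^sup>2"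
    by (simp add: power_mono)
  also have "\<dots> \<le> (\<Sum>z\<in>Z. a z * (norm (x z))\<^sup>2)"
    using convex_on_sum[OF assms(1,2) convex_power2 assms(3), of "\<lambda>z. norm (x z)"] assms(4)
    by simp
  finally show ?thesis .
qed

lemma norm_add_power2_le: "(norm (a + b :: 'a::real_normed_vector))\<^sup>2 \<le> 2 * (norm a)\<^sup>2 + 2 * (norm b)\<^sup>2"
proof -
  have "(norm (a + b))\<^sup>2 \<le> (norm a + norm b)\<^sup>2"
    by (simp add: power_mono norm_triangle_ineq)
  also have "\<dots> \<le> 2 * (norm a)\<^sup>2 + 2 * (norm b)\<^sup>2"
    using zero_le_power2[of "norm a - norm b"] by (simp add: power2_eq_square algebra_simps)
  finally show ?thesis .
qed

lemma exists_subset_sum_le_average: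
  fixes a :: "'b \<Rightarrow> real"
  assumes "finite H" "k \<le> card H"
  shows "\<exists>S\<subseteq>H. card S = k \<and> (\<Sum>i\<in>S. a i) \<le> real k / real (card H) * (\<Sum>i\<in>H. a i)"
  using assms
proof (induction "card H" arbitrary: H)
  case 0
  then show ?case by auto
next
  case (Suc N)
  show ?case
  proof (cases "k = Suc N")
    case True
    then show ?thesis using Suc by (intro exI[of _ H]) auto
  next
    case False
    then have kN: "k \<le> N" using Suc by simp
    obtain x where x: "x \<in> H" "\<And>y. y \<in> H \<Longrightarrow> a y \<le> a x"
      using Max_in[of "a ` H"] Max_ge[of "a ` H"] Suc by fastforce
    \<comment> \<open>drop a point with maximal value; the average of the rest does not increase\<close>
    have "card (H - {x}) = N" using Suc x by simp
    then obtain S where S: "S \<subseteq> H - {x}" "card S = k"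
        "(\<Sum>i\<in>S. a i) \<le> real k / real N * (\<Sum>i\<in>H - {x}. a i)"
      using Suc.hyps(1)[of "H - {x}"] Suc.prems kN by auto
    have sH: "(\<Sum>i\<in>H. a i) = a x + (\<Sum>i\<in>H - {x}. a i)"
      using Suc.prems(1) x(1) by (simp add: sum.remove)
    have "(\<Sum>i\<in>H. a i) \<le> real (Suc N) * a x"
      using sum_bounded_above[of H a "a x"] x Suc.hyps(2) by simp
    then have avg: "real (Suc N) * (\<Sum>i\<in>H - {x}. a i) \<le> real N * (\<Sum>i\<in>H. a i)"
      using sH by (simp add: algebra_simps)
    show ?thesis
    proof (cases "N = 0")
      case True
      then show ?thesis using S kN by (intro exI[of _ S]) auto
    next
      case N0: False
      have "real k / real N * (\<Sum>i\<in>H - {x}. a i)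
          = real k / (real N * real (Suc N)) * (real (Suc N) * (\<Sum>i\<in>H - {x}. a i))"
        using N0 by (simp add: divide_simps del: of_nat_Suc)
      also have "\<dots> \<le> real k / (real N * real (Suc N)) * (real N * (\<Sum>i\<in>H. a i))"
        by (rule mult_left_mono[OF avg]) simp
      also have "\<dots> = real k / real (card H) * (\<Sum>i\<in>H. a i)"
        using N0 Suc.hyps(2) by (simp add: divide_simps del: of_nat_Suc)
      finally show ?thesis using S by (intro exI[of _ S]) auto
    qed
  qed
qed

lemma trimmed_loss_le_subset_sum:
  assumes "S \<subseteq> {1..n}" "card S = n - f"
  shows "trimmed_loss n f g U m \<le> (\<Sum>i\<in>S. (norm (g i - aff_proj U m (g i)))\<^sup>2)"
proof -
  let ?loss = "\<lambda>S. \<Sum>i\<in>S. (norm (g i - aff_proj U m (g i)))\<^sup>2"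
  have "{?loss S | S. S \<subseteq> {1..n} \<and> card S = n - f} \<subseteq> ?loss ` Pow {1..n}" by auto
  then have "finite {?loss S | S. S \<subseteq> {1..n} \<and> card S = n - f}"
    by (rule finite_subset) simp
  then show ?thesis unfolding trimmed_loss_def
    by (rule Min_le) (use assms in blast)
qed

lemma trimmed_loss_le_average:
  assumes "H \<subseteq> {1..n}" "n - f \<le> card H"
  shows "trimmed_loss n f g U m
           \<le> real (n - f) / real (card H) * (\<Sum>i\<in>H. (norm (g i - aff_proj U m (g i)))\<^sup>2)"
proof -
  have "finite H" using assms(1) finite_subset by blast
  then obtain S where S: "S \<subseteq> H" "card S = n - f"
      "(\<Sum>i\<in>S. (norm (g i - aff_proj U m (g i)))\<^sup>2)
         \<le> real (n - f) / real (card H) * (\<Sum>i\<in>H. (norm (g i - aff_proj U m (g i)))\<^sup>2)"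
    using exists_subset_sum_le_average assms(2) by blast
  have "trimmed_loss n f g U m \<le> (\<Sum>i\<in>S. (norm (g i - aff_proj U m (g i)))\<^sup>2)"
    by (rule trimmed_loss_le_subset_sum) (use S assms(1) in auto)
  with S(3) show ?thesis by linarith
qed

lemma aff_proj_residual_le_mixture:
  fixes U :: "'a::euclidean_space list"
  assumes on: "orthonormal_cols U"
    and mem: "\<And>z. z \<in> Z \<Longrightarrow> gam z \<in> aff_subspace U m"
    and Z: "finite Z" "Z \<noteq> {}"
    and p_nonneg: "\<And>z. z \<in> Z \<Longrightarrow> p z \<ge> 0" and p_sum: "(\<Sum>z\<in>Z. p z) = 1"
    and mix: "e = (\<Sum>z\<in>Z. p z *\<^sub>R Egam z)"
  shows "(norm (x - aff_proj U m x))\<^sup>2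
           \<le> 2 * (norm (x - e))\<^sup>2 + 2 * (\<Sum>z\<in>Z. p z * (norm (Egam z - gam z))\<^sup>2)"
proof -
  define y where "y = (\<Sum>z\<in>Z. p z *\<^sub>R gam z)"
  have "y \<in> aff_subspace U m"
    unfolding y_def by (rule aff_subspace_affine_comb[OF Z(1) mem p_sum])
  then have "norm (x - aff_proj U m x) \<le> norm (x - y)" by (rule aff_proj_dist_le[OF on])
  then have "(norm (x - aff_proj U m x))\<^sup>2 \<le> (norm (x - y))\<^sup>2" by (simp add: power_mono)
  also have "x - y = (x - e) + (\<Sum>z\<in>Z. p z *\<^sub>R (Egam z - gam z))"
    unfolding mix y_def by (simp add: scaleR_diff_right sum_subtractf)
  also have "(norm \<dots>)\<^sup>2
      \<le> 2 * (norm (x - e))\<^sup>2 + 2 * (norm (\<Sum>z\<in>Z. p z *\<^sub>R (Egam z - gam z)))\<^sup>2"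
    by (rule norm_add_power2_le)
  also have "(norm (\<Sum>z\<in>Z. p z *\<^sub>R (Egam z - gam z)))\<^sup>2 \<le> (\<Sum>z\<in>Z. p z * (norm (Egam z - gam z))\<^sup>2)"
    by (rule norm_convex_comb_power2_le[OF Z p_sum p_nonneg])
  finally show ?thesis by simp
qed

lemma card_honest_ge:
  assumes "H \<subseteq> {1..n}" "card ({1..n} - H) \<le> f"
  shows "n - f \<le> card H"
proof -
  have "finite H" using assms(1) finite_subset by blast
  then have "card ({1..n} - H) = n - card H" using assms(1) by (simp add: card_Diff_subset)
  then show ?thesis using assms by simp
qed

lemma trimmed_loss_bound:
  fixes g :: "nat \<Rightarrow> 'a::euclidean_space" and p :: "nat \<Rightarrow> nat \<Rightarrow> real"
  assumes Hs: "H \<subseteq> {1..n}" and cardH: "n - f \<le> card H" and c1: "c \<ge> 1"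
    and p_nonneg: "\<And>i z. i \<in> H \<Longrightarrow> z \<in> {1..c} \<Longrightarrow> p i z \<ge> 0"
    and p_sum: "\<And>i. i \<in> H \<Longrightarrow> (\<Sum>z=1..c. p i z) = 1"
    and Eg_mix: "\<And>i. i \<in> H \<Longrightarrow> Eg i = (\<Sum>z=1..c. p i z *\<^sub>R Egam z)"
    and on0: "orthonormal_cols U0"
    and mem: "\<And>z. z \<in> {1..c} \<Longrightarrow> gam z \<in> aff_subspace U0 m0"
    and better: "trimmed_loss n f g U m \<le> trimmed_loss n f g U0 m0"
  shows "trimmed_loss n f g U m
           \<le> 2 * real (n - f) / real (card H) *
              ((\<Sum>i\<in>H. (norm (g i - Eg i))\<^sup>2)
               + (\<Sum>i\<in>H. \<Sum>z=1..c. p i z * (norm (Egam z - gam z))\<^sup>2))"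
proof -
  let ?B = "\<lambda>i. 2 * (norm (g i - Eg i))\<^sup>2 + 2 * (\<Sum>z=1..c. p i z * (norm (Egam z - gam z))\<^sup>2)"
  have "trimmed_loss n f g U0 m0
      \<le> real (n - f) / real (card H) * (\<Sum>i\<in>H. (norm (g i - aff_proj U0 m0 (g i)))\<^sup>2)"
    by (rule trimmed_loss_le_average[OF Hs cardH])
  also have "\<dots> \<le> real (n - f) / real (card H) * (\<Sum>i\<in>H. ?B i)"
  proof (intro mult_left_mono sum_mono)
    fix i assume "i \<in> H"
    then show "(norm (g i - aff_proj U0 m0 (g i)))\<^sup>2 \<le> ?B i"
      by (intro aff_proj_residual_le_mixture[OF on0 mem]) (use c1 p_nonneg p_sum Eg_mix in auto)
  qed simp
  also have "\<dots> = 2 * real (n - f) / real (card H) *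
                 ((\<Sum>i\<in>H. (norm (g i - Eg i))\<^sup>2)
                  + (\<Sum>i\<in>H. \<Sum>z=1..c. p i z * (norm (Egam z - gam z))\<^sup>2))"
    by (simp add: sum.distrib sum_distrib_left[symmetric] algebra_simps)
  finally show ?thesis using better by linarith
qed

lemma nn_integral_convex_comb_le:
  fixes B :: "'b \<Rightarrow> 'w \<Rightarrow> real"
  assumes B_meas: "\<And>z. z \<in> Z \<Longrightarrow> B z \<in> borel_measurable M"
    and B_nonneg: "\<And>z \<omega>. z \<in> Z \<Longrightarrow> B z \<omega> \<ge> 0"
    and p_nonneg: "\<And>z. z \<in> Z \<Longrightarrow> p z \<ge> 0" and p_sum: "(\<Sum>z\<in>Z. p z) = 1"
    and B_int: "\<And>z. z \<in> Z \<Longrightarrow> (\<integral>\<^sup>+ \<omega>. ennreal (B z \<omega>) \<partial>M) \<le> e"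
  shows "(\<integral>\<^sup>+ \<omega>. ennreal (\<Sum>z\<in>Z. p z * B z \<omega>) \<partial>M) \<le> e"
proof -
  have "(\<integral>\<^sup>+ \<omega>. ennreal (\<Sum>z\<in>Z. p z * B z \<omega>) \<partial>M)
      = (\<integral>\<^sup>+ \<omega>. (\<Sum>z\<in>Z. ennreal (p z) * ennreal (B z \<omega>)) \<partial>M)"
    using p_nonneg B_nonneg
    by (intro nn_integral_cong) (simp add: ennreal_mult sum_nonneg flip: sum_ennreal)
  also have "\<dots> = (\<Sum>z\<in>Z. ennreal (p z) * (\<integral>\<^sup>+ \<omega>. ennreal (B z \<omega>) \<partial>M))"
    using B_meas by (simp add: nn_integral_sum nn_integral_cmult)
  also have "\<dots> \<le> (\<Sum>z\<in>Z. ennreal (p z) * e)"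
    using B_int by (intro sum_mono mult_left_mono) auto
  also have "\<dots> = e"
    using p_nonneg p_sum by (simp flip: sum_distrib_right)
  finally show ?thesis .
qed

lemma nn_integral_le_of_mixture_bound:
  fixes A :: "'i \<Rightarrow> 'w \<Rightarrow> real" and B :: "'z \<Rightarrow> 'w \<Rightarrow> real"
  assumes K: "K \<ge> 0" and ab: "a \<ge> 0" "b \<ge> 0"
    and A_meas: "\<And>i. i \<in> H \<Longrightarrow> A i \<in> borel_measurable M"
    and B_meas: "\<And>z. z \<in> Z \<Longrightarrow> B z \<in> borel_measurable M"
    and A_nonneg: "\<And>i \<omega>. i \<in> H \<Longrightarrow> A i \<omega> \<ge> 0"
    and B_nonneg: "\<And>z \<omega>. z \<in> Z \<Longrightarrow> B z \<omega> \<ge> 0"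
    and p_nonneg: "\<And>i z. i \<in> H \<Longrightarrow> z \<in> Z \<Longrightarrow> p i z \<ge> 0"
    and p_sum: "\<And>i. i \<in> H \<Longrightarrow> (\<Sum>z\<in>Z. p i z) = 1"
    and A_int: "\<And>i. i \<in> H \<Longrightarrow> (\<integral>\<^sup>+ \<omega>. ennreal (A i \<omega>) \<partial>M) \<le> ennreal a"
    and B_int: "\<And>z. z \<in> Z \<Longrightarrow> (\<integral>\<^sup>+ \<omega>. ennreal (B z \<omega>) \<partial>M) \<le> ennreal b"
    and L: "\<And>\<omega>. \<omega> \<in> space M \<Longrightarrow>
              L \<omega> \<le> K * ((\<Sum>i\<in>H. A i \<omega>) + (\<Sum>i\<in>H. \<Sum>z\<in>Z. p i z * B z \<omega>))"
  shows "(\<integral>\<^sup>+ \<omega>. ennreal (L \<omega>) \<partial>M) \<le> ennreal (K * real (card H) * (a + b))"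
proof -
  define C where "C i \<omega> = A i \<omega> + (\<Sum>z\<in>Z. p i z * B z \<omega>)" for i \<omega>
  have C_nonneg: "C i \<omega> \<ge> 0" if "i \<in> H" for i \<omega>
    unfolding C_def using that A_nonneg B_nonneg p_nonneg
    by (intro add_nonneg_nonneg sum_nonneg mult_nonneg_nonneg) auto
  have C_int: "(\<integral>\<^sup>+ \<omega>. ennreal (C i \<omega>) \<partial>M) \<le> ennreal a + ennreal b" if i: "i \<in> H" for i
  proof -
    have "(\<integral>\<^sup>+ \<omega>. ennreal (C i \<omega>) \<partial>M)
        = (\<integral>\<^sup>+ \<omega>. ennreal (A i \<omega>) \<partial>M) + (\<integral>\<^sup>+ \<omega>. ennreal (\<Sum>z\<in>Z. p i z * B z \<omega>) \<partial>M)"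
      unfolding C_def using A_meas[OF i] B_meas i A_nonneg B_nonneg p_nonneg
      by (subst ennreal_plus) (auto intro!: nn_integral_add sum_nonneg)
    also have "\<dots> \<le> ennreal a + ennreal b"
    proof (rule add_mono)
      show "(\<integral>\<^sup>+ \<omega>. ennreal (\<Sum>z\<in>Z. p i z * B z \<omega>) \<partial>M) \<le> ennreal b"
        by (rule nn_integral_convex_comb_le[OF B_meas B_nonneg _ p_sum[OF i] B_int])
          (use p_nonneg i in auto)
    qed (rule A_int[OF i])
    finally show ?thesis .
  qed
  have "(\<integral>\<^sup>+ \<omega>. ennreal (L \<omega>) \<partial>M) \<le> (\<integral>\<^sup>+ \<omega>. ennreal K * (\<Sum>i\<in>H. ennreal (C i \<omega>)) \<partial>M)"
  proof (rule nn_integral_mono)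
    fix \<omega> assume "\<omega> \<in> space M"
    then have "L \<omega> \<le> K * (\<Sum>i\<in>H. C i \<omega>)"
      using L unfolding C_def by (simp add: sum.distrib)
    then show "ennreal (L \<omega>) \<le> ennreal K * (\<Sum>i\<in>H. ennreal (C i \<omega>))"
      using C_nonneg K by (simp add: ennreal_leI sum_nonneg flip: ennreal_mult)
  qed
  also have "\<dots> = ennreal K * (\<Sum>i\<in>H. \<integral>\<^sup>+ \<omega>. ennreal (C i \<omega>) \<partial>M)"
    using A_meas B_meas unfolding C_def
    by (simp add: nn_integral_cmult nn_integral_sum borel_measurable_sum)
  also have "\<dots> \<le> ennreal K * (\<Sum>i\<in>H. ennreal a + ennreal b)"
    using C_int by (intro mult_left_mono sum_mono) auto
  also have "\<dots> \<le> ennreal (K * real (card H) * (a + b))"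
    using K ab by (simp add: ennreal_of_nat_eq_real_of_nat mult.assoc flip: ennreal_plus ennreal_mult)
  finally show ?thesis .
qed

theorem mainTheorem7:
  fixes n f c :: nat
    and H :: "nat set"
    and M :: "'w measure"
    and g :: "'w \<Rightarrow> nat \<Rightarrow> 'a::euclidean_space"
    and Eg :: "nat \<Rightarrow> 'a"
    and gam :: "'w \<Rightarrow> nat \<Rightarrow> 'a"
    and Egam :: "nat \<Rightarrow> 'a"
    and p :: "nat \<Rightarrow> nat \<Rightarrow> real"
    and U0 U :: "'w \<Rightarrow> 'a list"
    and m0 m :: "'w \<Rightarrow> 'a"
    and eps eps_s :: real
  assumes "n > 0" "f > 0" "c \<ge> 2" "DIM('a) \<ge> c" "n \<ge> 2 * f + 1"
    and "H \<subseteq> {1..n}" "card ({1..n} - H) \<le> f"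
    and p_nonneg: "\<And>i z. i \<in> H \<Longrightarrow> z \<in> {1..c} \<Longrightarrow> p i z \<ge> 0"
    and p_sum: "\<And>i. i \<in> H \<Longrightarrow> (\<Sum>z=1..c. p i z) = 1"
    and Eg_mix: "\<And>i. i \<in> H \<Longrightarrow> Eg i = (\<Sum>z=1..c. p i z *\<^sub>R Egam z)"
    and P0_on: "\<And>\<omega>. \<omega> \<in> space M \<Longrightarrow> orthonormal_cols (U0 \<omega>)"
    and P0_contains: "\<And>\<omega> z. \<omega> \<in> space M \<Longrightarrow> z \<in> {1..c} \<Longrightarrow>
                        gam \<omega> z \<in> aff_subspace (U0 \<omega>) (m0 \<omega>)"
    and P_on: "\<And>\<omega>. \<omega> \<in> space M \<Longrightarrow> orthonormal_cols (U \<omega>)"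
    and P_better: "\<And>\<omega>. \<omega> \<in> space M \<Longrightarrow>
        trimmed_loss n f (g \<omega>) (U \<omega>) (m \<omega>) \<le> trimmed_loss n f (g \<omega>) (U0 \<omega>) (m0 \<omega>)"
  shows "(\<forall>\<omega>\<in>space M.
            trimmed_loss n f (g \<omega>) (U \<omega>) (m \<omega>)
              \<le> 2 * real (n - f) / real (card H) *
                 ((\<Sum>i\<in>H. (norm (g \<omega> i - Eg i))\<^sup>2)
                  + (\<Sum>i\<in>H. \<Sum>z=1..c. p i z * (norm (Egam z - gam \<omega> z))\<^sup>2)))
       \<and> ((prob_space M
            \<and> (\<forall>i\<in>H. (\<lambda>\<omega>. g \<omega> i) \<in> borel_measurable M)
            \<and> (\<forall>z\<in>{1..c}. (\<lambda>\<omega>. gam \<omega> z) \<in> borel_measurable M)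
            \<and> (\<forall>i\<in>H. (\<integral>\<^sup>+ \<omega>. ennreal ((norm (g \<omega> i - Eg i))\<^sup>2) \<partial>M) \<le> ennreal (eps\<^sup>2))
            \<and> (\<forall>z\<in>{1..c}. (\<integral>\<^sup>+ \<omega>. ennreal ((norm (gam \<omega> z - Egam z))\<^sup>2) \<partial>M)
                               \<le> ennreal (eps_s\<^sup>2)))
          \<longrightarrow> (\<integral>\<^sup>+ \<omega>. ennreal (trimmed_loss n f (g \<omega>) (U \<omega>) (m \<omega>)) \<partial>M)
                \<le> ennreal (2 * real (n - f) * (eps\<^sup>2 + eps_s\<^sup>2)))"
proof -
  have cardH: "n - f \<le> card H" by (rule card_honest_ge) fact+
  define K where "K = 2 * real (n - f) / real (card H)"
  have bound: "trimmed_loss n f (g \<omega>) (U \<omega>) (m \<omega>)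
      \<le> K * ((\<Sum>i\<in>H. (norm (g \<omega> i - Eg i))\<^sup>2)
              + (\<Sum>i\<in>H. \<Sum>z=1..c. p i z * (norm (gam \<omega> z - Egam z))\<^sup>2))"
    if "\<omega> \<in> space M" for \<omega>
    using trimmed_loss_bound[OF \<open>H \<subseteq> {1..n}\<close> cardH _ p_nonneg p_sum Eg_mix P0_on[OF that]
        P0_contains[OF that] P_better[OF that]] \<open>c \<ge> 2\<close>
    unfolding K_def by (simp add: norm_minus_commute)
  have K_card: "K * real (card H) = 2 * real (n - f)"
    using cardH \<open>n \<ge> 2 * f + 1\<close> unfolding K_def by simp
  show ?thesis
  proof (intro conjI impI, goal_cases)
    case 1
    then show ?case using bound unfolding K_def by (simp add: norm_minus_commute)
  next
    case 2
    have g_meas: "(\<lambda>\<omega>. (norm (g \<omega> i - Eg i))\<^sup>2) \<in> borel_measurable M" if "i \<in> H" for i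
    proof -
      have [measurable]: "(\<lambda>\<omega>. g \<omega> i) \<in> borel_measurable M" using 2 that by blast
      show ?thesis by measurable
    qed
    have gam_meas: "(\<lambda>\<omega>. (norm (gam \<omega> z - Egam z))\<^sup>2) \<in> borel_measurable M" if "z \<in> {1..c}" for z
    proof -
      have [measurable]: "(\<lambda>\<omega>. gam \<omega> z) \<in> borel_measurable M" using 2 that by blast
      show ?thesis by measurable
    qed
    have "(\<integral>\<^sup>+ \<omega>. ennreal (trimmed_loss n f (g \<omega>) (U \<omega>) (m \<omega>)) \<partial>M)
        \<le> ennreal (K * real (card H) * (eps\<^sup>2 + eps_s\<^sup>2))"
      by (rule nn_integral_le_of_mixture_bound[OF _ _ _ g_meas gam_meas _ _ p_nonneg p_sum _ _ bound])
        (use 2 in \<open>auto simp: K_def\<close>)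
    then show ?case unfolding K_card .
  qed
qed

end
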